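(* Let $K\ge1$, $T\ge1$, $\ell_1,\dots,\ell_T\in[0,1]^K$, $\phi>1$, $\alpha>0$. For FlipFlop with parameters $\phi,\alpha$, the cumulative mixability gap of the flop regime satisfies \[ \big(\underline{\Delta}_T\big)^2\le\underline{V}_T\ln K+\big(1+\tfrac23\ln K\big)\underline{\Delta}_T. \]
   Context: Hedge setting: $K$ experts; in round $t$ the learner chooses a probability vector $w_t$, then $\ell_t$ is revealed and the learner suffers $h_t=\sum_kw_{t,k}\ell_{t,k}$. Write $L_{t,k}=\sum_{s=1}^t\ell_{s,k}$ ($L_{0,k}=0$), $L^*_t=\min_kL_{t,k}$. Exponential weights with learning rate $\eta\in(0,\infty]$ at time $t$: $w_{t,k}=e^{-\eta L_{t-1,k}}/\sum_je^{-\eta L_{t-1,j}}$ if $\eta<\infty$; for $\eta=\infty$, $w_t$ uniform on $\{k:L_{t-1,k}=L^*_{t-1}\}$. With learning rate $\eta_t$ in round $t$: mix loss $m_t=-\frac1{\eta_t}\ln\sum_kw_{t,k}e^{-\eta_t\ell_{t,k}}$ if $\eta_t<\infty$, $m_t=L^*_t-L^*_{t-1}$ if $\eta_t=\infty$; mixability gap $\delta_t=h_t-m_t$; loss variance $v_t=\sum_kw_{t,k}(\ell_{t,k}-h_t)^2$. FlipFlop with parameters $\phi>1,\alpha>0$: keeps accumulators $\overline{\Delta}$ (flip) and $\underline{\Delta}$ (flop), both initially $0$, starting in the flip regime. In round $t$: flip regime uses $\eta_t=\infty$; flop regime uses $\eta_t=\ln K/\underline{\Delta}_{t-1}$ ($=\infty$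 if $\underline{\Delta}_{t-1}=0$); weights are exponential weights with learning rate $\eta_t$ from $L_{t-1}$. After round $t$, $\delta_t$ is added to the current regime's accumulator. If in flip and $\overline{\Delta}_t>(\phi/\alpha)\underline{\Delta}_t$, switch to flop for round $t+1$; if in flop and $\underline{\Delta}_t>\alpha\overline{\Delta}_t$, switch to flip for round $t+1$. $\underline{\Delta}_T$ is the sum of $\delta_t$ over flop rounds $t\le T$, and $\underline{V}_T$ is the sum of $v_t$ over flop rounds $t\le T$. *)

theory Defs
  imports Complex_Main "HOL-Library.Extended_Real"
begin

text \<open>Experts are indexed by k < K; rounds by t = 1, 2, ...;
  l t k is the loss of expert k in round t. Learning rates live in ereal,
  with the value \<infinity> encoding the learning rate infinity.\<close>

definition cumloss :: "(nat \<Rightarrow> nat \<Rightarrow> real) \<Rightarrow> nat \<Rightarrow> nat \<Rightarrow> real" where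
  "cumloss l t k = (\<Sum>s=1..t. l s k)"

definition minloss :: "nat \<Rightarrow> (nat \<Rightarrow> nat \<Rightarrow> real) \<Rightarrow> nat \<Rightarrow> real" where
  "minloss K l t = Min ((\<lambda>k. cumloss l t k) ` {..<K})"

definition ew_weight :: "nat \<Rightarrow> (nat \<Rightarrow> nat \<Rightarrow> real) \<Rightarrow> ereal \<Rightarrow> nat \<Rightarrow> nat \<Rightarrow> real" where
  "ew_weight K l eta t k =
     (if eta = \<infinity> then
        (if cumloss l (t - 1) k = minloss K l (t - 1)
         then 1 / real (card {j. j < K \<and> cumloss l (t - 1) j = minloss K l (t - 1)})
         else 0)
      else exp (- real_of_ereal eta * cumloss l (t - 1) k) /
           (\<Sum>j<K. exp (- real_of_ereal eta * cumloss l (t - 1) j)))"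

definition hedge_loss :: "nat \<Rightarrow> (nat \<Rightarrow> nat \<Rightarrow> real) \<Rightarrow> ereal \<Rightarrow> nat \<Rightarrow> real" where
  "hedge_loss K l eta t = (\<Sum>k<K. ew_weight K l eta t k * l t k)"

definition mix_loss :: "nat \<Rightarrow> (nat \<Rightarrow> nat \<Rightarrow> real) \<Rightarrow> ereal \<Rightarrow> nat \<Rightarrow> real" where
  "mix_loss K l eta t =
     (if eta = \<infinity> then minloss K l t - minloss K l (t - 1)
      else - (1 / real_of_ereal eta) *
             ln (\<Sum>k<K. ew_weight K l eta t k * exp (- real_of_ereal eta * l t k)))"

definition mix_gap :: "nat \<Rightarrow> (nat \<Rightarrow> nat \<Rightarrow> real) \<Rightarrow> ereal \<Rightarrow> nat \<Rightarrow> real" where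
  "mix_gap K l eta t = hedge_loss K l eta t - mix_loss K l eta t"

definition loss_var :: "nat \<Rightarrow> (nat \<Rightarrow> nat \<Rightarrow> real) \<Rightarrow> ereal \<Rightarrow> nat \<Rightarrow> real" where
  "loss_var K l eta t = (\<Sum>k<K. ew_weight K l eta t k * (l t k - hedge_loss K l eta t)^2)"

text \<open>FlipFlop state after t rounds: (in_flip_regime_for_next_round, flip accumulator,
  flop accumulator, sum of loss variances over flop rounds).\<close>
fun flipflop_state :: "nat \<Rightarrow> (nat \<Rightarrow> nat \<Rightarrow> real) \<Rightarrow> real \<Rightarrow> real \<Rightarrow> nat \<Rightarrow> bool \<times> real \<times> real \<times> real" where
  "flipflop_state K l \<phi> \<alpha> 0 = (True, 0, 0, 0)"
| "flipflop_state K l \<phi> \<alpha> (Suc t) =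
     (let (fl, dflip, dflop, vflop) = flipflop_state K l \<phi> \<alpha> t;
          eta = (if fl then \<infinity> else if dflop = 0 then \<infinity> else ereal (ln (real K) / dflop));
          d = mix_gap K l eta (Suc t);
          v = loss_var K l eta (Suc t);
          dflip' = (if fl then dflip + d else dflip);
          dflop' = (if fl then dflop else dflop + d);
          vflop' = (if fl then vflop else vflop + v);
          fl' = (if fl then \<not> (dflip' > (\<phi> / \<alpha>) * dflop') else dflop' > \<alpha> * dflip')
      in (fl', dflip', dflop', vflop'))"

definition flop_gap :: "nat \<Rightarrow> (nat \<Rightarrow> nat \<Rightarrow> real) \<Rightarrow> real \<Rightarrow> real \<Rightarrow> nat \<Rightarrow> real" where
  "flop_gap K l \<phi> \<alpha> T = fst (snd (snd (flipflop_state K l \<phi> \<alpha> T)))"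

definition flop_var :: "nat \<Rightarrow> (nat \<Rightarrow> nat \<Rightarrow> real) \<Rightarrow> real \<Rightarrow> real \<Rightarrow> nat \<Rightarrow> real" where
  "flop_var K l \<phi> \<alpha> T = snd (snd (snd (flipflop_state K l \<phi> \<alpha> T)))"

end

theory Submission
  imports Defs
begin

text \<open>In a flop round with accumulated flop gap \<open>b > 0\<close> the learning rate is
  \<open>\<eta> = ln K / b\<close>. Bernstein's bound on the mixability gap, \<open>\<delta> (1 - \<eta>/3) \<le> \<eta> v / 2\<close>,
  multiplied by \<open>2 b\<close> reads \<open>2 b \<delta> \<le> v ln K + 2/3 ln K \<delta>\<close>; adding \<open>\<delta>\<^sup>2 \<le> \<delta>\<close>
  (as \<open>0 \<le> \<delta> \<le> 1\<close>) shows that \<open>b\<^sup>2 \<le> V ln K + (1 + 2/3 ln K) b\<close> is preserved by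
  every flop round. When \<open>b = 0\<close> the learning rate is \<open>\<infinity>\<close> and the step is trivial, and
  flip rounds change neither side. Bernstein's bound follows by averaging
  \<open>exp u \<le> 1 + u + u\<^sup>2 / (2 (1 - \<eta>/3))\<close>, valid for \<open>u \<le> \<eta> < 3\<close>, over
  \<open>u = \<eta> (h - \<ell>\<^sub>k)\<close>.\<close>

lemma two_mult_three_power_le_fact: "2 * 3 ^ n \<le> (fact (n + 2) :: real)"
proof (induction n)
  case 0
  then show ?case by simp
next
  case (Suc n)
  have "(3 :: real) * fact (n + 2) \<le> real (n + 3) * fact (n + 2)"
    by (rule mult_right_mono) auto
  also have "\<dots> = fact (Suc n + 2)"
    by (simp add: fact_Suc numeral_3_eq_3)
  finally show ?case
    using Suc.IH by (simp only: power_Suc)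
qed

lemma exp_le_bernstein_nonneg:
  fixes u :: real
  assumes "0 \<le> u" "u < 3"
  shows "exp u \<le> 1 + u + u\<^sup>2 / (2 * (1 - u / 3))"
proof -
  have "(\<lambda>n. u ^ n / fact n) sums exp u"
    using exp_converges[of u] by (simp add: divide_inverse mult.commute)
  then have tail: "(\<lambda>n. u ^ (n + 2) / fact (n + 2)) sums (exp u - (\<Sum>n<2. u ^ n / fact n))"
    by (subst sums_iff_shift) simp
  have geometric: "(\<lambda>n. u\<^sup>2 / 2 * (u / 3) ^ n) sums (u\<^sup>2 / 2 * (1 / (1 - u / 3)))"
    using assms by (intro sums_mult geometric_sums) auto
  have "exp u - (\<Sum>n<2. u ^ n / fact n) \<le> u\<^sup>2 / 2 * (1 / (1 - u / 3))"
  proof (rule sums_le[OF _ tail geometric])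
    fix n
    have "u ^ (n + 2) / fact (n + 2) \<le> u ^ (n + 2) / (2 * 3 ^ n)"
      using assms by (intro divide_left_mono two_mult_three_power_le_fact) auto
    also have "\<dots> = u\<^sup>2 / 2 * (u / 3) ^ n"
      by (simp add: power_add power_divide power2_eq_square)
    finally show "u ^ (n + 2) / fact (n + 2) \<le> u\<^sup>2 / 2 * (u / 3) ^ n" .
  qed
  then show ?thesis
    by (simp add: eval_nat_numeral)
qed

lemma exp_le_quadratic_nonpos:
  fixes u :: real
  assumes "u \<le> 0"
  shows "exp u \<le> 1 + u + u\<^sup>2 / 2"
proof (cases "u = 0")
  case True
  then show ?thesis by simp
next
  case False
  then obtain \<xi> where \<xi>: "exp u = (\<Sum>m<3. u ^ m / fact m) + exp \<xi> / fact 3 * u ^ 3"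
    using Maclaurin_exp_lt[of u 3] by auto
  have "u ^ 3 \<le> 0"
    using assms by (simp add: power3_eq_cube mult_nonneg_nonpos)
  then have "exp \<xi> / fact 3 * u ^ 3 \<le> 0"
    by (intro mult_nonneg_nonpos) auto
  with \<xi> show ?thesis
    by (simp add: eval_nat_numeral)
qed

lemma exp_le_bernstein:
  fixes u e :: real
  assumes "u \<le> e" "0 \<le> e" "e < 3"
  shows "exp u \<le> 1 + u + u\<^sup>2 / (2 * (1 - e / 3))"
proof (cases "u \<le> 0")
  case True
  have "u\<^sup>2 / 2 \<le> u\<^sup>2 / (2 * (1 - e / 3))"
    using assms by (intro divide_left_mono) auto
  with exp_le_quadratic_nonpos[OF True] show ?thesis
    by linarith
next
  case False
  then have "exp u \<le> 1 + u + u\<^sup>2 / (2 * (1 - u / 3))"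
    using assms by (intro exp_le_bernstein_nonneg) auto
  also have "u\<^sup>2 / (2 * (1 - u / 3)) \<le> u\<^sup>2 / (2 * (1 - e / 3))"
    using assms False by (intro divide_left_mono) auto
  finally show ?thesis
    by simp
qed

locale prob_vector =
  fixes A :: "'a set" and w :: "'a \<Rightarrow> real"
  assumes finite_domain [simp]: "finite A"
    and nonneg: "k \<in> A \<Longrightarrow> 0 \<le> w k"
    and sum_eq_1: "sum w A = 1"
begin

definition mean :: "('a \<Rightarrow> real) \<Rightarrow> real" where
  "mean x = (\<Sum>k\<in>A. w k * x k)"

definition variance :: "('a \<Rightarrow> real) \<Rightarrow> real" where
  "variance x = mean (\<lambda>k. (x k - mean x)\<^sup>2)"

definition mix_gap_at :: "real \<Rightarrow> ('a \<Rightarrow> real) \<Rightarrow> real" where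
  "mix_gap_at e x = mean x + ln (mean (\<lambda>k. exp (- e * x k))) / e"

lemma mean_const [simp]: "mean (\<lambda>_. c) = c"
  by (simp add: mean_def sum_eq_1 flip: sum_distrib_right)

lemma mean_add: "mean (\<lambda>k. x k + y k) = mean x + mean y"
  by (simp add: mean_def distrib_left sum.distrib)

lemma mean_diff: "mean (\<lambda>k. x k - y k) = mean x - mean y"
  by (simp add: mean_def right_diff_distrib sum_subtractf)

lemma mean_cmult: "mean (\<lambda>k. c * x k) = c * mean x"
  by (simp add: mean_def sum_distrib_left mult.left_commute)

lemma mean_divide: "mean (\<lambda>k. x k / c) = mean x / c"
  by (simp add: mean_def sum_divide_distrib)

lemma mean_mono: "(\<And>k. k \<in> A \<Longrightarrow> x k \<le> y k) \<Longrightarrow> mean x \<le> mean y"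
  unfolding mean_def by (intro sum_mono mult_left_mono) (auto simp: nonneg)

lemma mean_ge_on_support:
  assumes "\<And>k. k \<in> A \<Longrightarrow> w k \<noteq> 0 \<Longrightarrow> c \<le> x k"
  shows "c \<le> mean x"
proof -
  have "mean (\<lambda>_. c) \<le> mean x"
    unfolding mean_def using assms nonneg
    by (intro sum_mono) (metis mult_left_mono mult_zero_left)
  then show ?thesis
    by simp
qed

lemma variance_nonneg: "0 \<le> variance x"
  using mean_mono[of "\<lambda>_. 0" "\<lambda>k. (x k - mean x)\<^sup>2"] by (simp add: variance_def)

lemma exp_mean_le_mean_exp: "exp (mean y) \<le> mean (\<lambda>k. exp (y k))"
proof -
  have "mean (\<lambda>k. exp (mean y) * (1 + (y k - mean y))) \<le> mean (\<lambda>k. exp (y k))"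
  proof (rule mean_mono)
    fix k
    have "exp (mean y) * (1 + (y k - mean y)) \<le> exp (mean y) * exp (y k - mean y)"
      by (intro mult_left_mono exp_ge_add_one_self) auto
    then show "exp (mean y) * (1 + (y k - mean y)) \<le> exp (y k)"
      by (simp add: exp_diff)
  qed
  moreover have "mean (\<lambda>k. 1 + (y k - mean y)) = 1"
    by (simp only: mean_add mean_diff mean_const)
  ultimately show ?thesis
    by (simp only: mean_cmult)
qed

lemma mean_exp_pos: "0 < mean (\<lambda>k. exp (y k))"
  using exp_mean_le_mean_exp[of y] by (rule less_le_trans[OF exp_gt_zero])

lemma mean_exp_le_bernstein:
  assumes "\<And>k. k \<in> A \<Longrightarrow> y k \<le> e" "0 \<le> e" "e < 3"
  shows "mean (\<lambda>k. exp (y k)) \<le> 1 + mean y + mean (\<lambda>k. (y k)\<^sup>2) / (2 * (1 - e / 3))"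
proof -
  have "mean (\<lambda>k. exp (y k)) \<le> mean (\<lambda>k. 1 + y k + (y k)\<^sup>2 / (2 * (1 - e / 3)))"
    using assms by (intro mean_mono exp_le_bernstein) auto
  then show ?thesis
    by (simp only: mean_add mean_const mean_divide)
qed

lemma mix_gap_at_nonneg:
  assumes "0 < e"
  shows "0 \<le> mix_gap_at e x"
proof -
  have "exp (- e * mean x) \<le> mean (\<lambda>k. exp (- e * x k))"
    using exp_mean_le_mean_exp[of "\<lambda>k. - e * x k"] by (simp only: mean_cmult)
  then have "- e * mean x \<le> ln (mean (\<lambda>k. exp (- e * x k)))"
    using mean_exp_pos by (simp only: ln_ge_iff)
  then have "- mean x \<le> ln (mean (\<lambda>k. exp (- e * x k))) / e"
    using assms by (simp add: pos_le_divide_eq mult.commute)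
  then show ?thesis
    by (simp add: mix_gap_at_def)
qed

context
  fixes x :: "'a \<Rightarrow> real"
  assumes range01: "\<And>k. k \<in> A \<Longrightarrow> 0 \<le> x k \<and> x k \<le> 1"
begin

lemma mix_gap_at_le_one:
  assumes "0 < e"
  shows "mix_gap_at e x \<le> 1"
proof -
  have "mean (\<lambda>k. exp (- e * x k)) \<le> 1"
    using mean_mono[of "\<lambda>k. exp (- e * x k)" "\<lambda>_. 1"] assms range01 by simp
  then have "ln (mean (\<lambda>k. exp (- e * x k))) / e \<le> 0"
    using assms mean_exp_pos[of "\<lambda>k. - e * x k"] by (simp add: divide_nonpos_pos)
  moreover have "mean x \<le> 1"
    using mean_mono[of x "\<lambda>_. 1"] range01 by simp
  ultimately show ?thesis
    by (simp add: mix_gap_at_def)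
qed

lemma mix_gap_at_bernstein:
  assumes "0 < e"
  shows "mix_gap_at e x * (1 - e / 3) \<le> e * variance x / 2"
proof (cases "e < 3")
  case False
  then have "mix_gap_at e x * (1 - e / 3) \<le> 0"
    using mix_gap_at_nonneg assms by (intro mult_nonneg_nonpos) auto
  also have "0 \<le> e * variance x / 2"
    using assms variance_nonneg by simp
  finally show ?thesis .
next
  case True
  define m where "m = mean x"
  define R where "R = mean (\<lambda>k. exp (e * (m - x k)))"
  have "e * (m - x k) \<le> e" if "k \<in> A" for k
    using assms range01[OF that] mean_mono[of x "\<lambda>_. 1"] range01 by (simp add: m_def mult_left_le)
  then have "R \<le> 1 + mean (\<lambda>k. e * (m - x k)) + mean (\<lambda>k. (e * (m - x k))\<^sup>2) / (2 * (1 - e / 3))"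
    unfolding R_def using assms True by (intro mean_exp_le_bernstein) auto
  also have "mean (\<lambda>k. e * (m - x k)) = 0"
    by (simp add: mean_cmult mean_diff m_def)
  also have "mean (\<lambda>k. (e * (m - x k))\<^sup>2) = e\<^sup>2 * variance x"
    by (simp add: variance_def m_def power_mult_distrib mean_cmult power2_commute)
  finally have R_le: "R \<le> 1 + e\<^sup>2 * variance x / (2 * (1 - e / 3))"
    by simp
  have R_pos: "0 < R"
    unfolding R_def by (rule mean_exp_pos)
  have "mean (\<lambda>k. exp (- e * x k)) = exp (- e * m) * R"
    unfolding R_def mean_cmult[symmetric] by (simp add: algebra_simps flip: exp_add)
  then have "mix_gap_at e x = ln R / e"
    using assms R_pos by (simp add: mix_gap_at_def ln_mult m_def field_simps)
  also have "\<dots> \<le> (R - 1) / e"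
    using assms R_pos by (intro divide_right_mono ln_le_minus_one) auto
  also have "\<dots> \<le> e * variance x / (2 * (1 - e / 3))"
    using assms R_le by (simp add: divide_le_eq power2_eq_square field_simps)
  finally show ?thesis
    using True by (simp add: field_simps)
qed

end

end

lemma cumloss_step: "1 \<le> t \<Longrightarrow> cumloss l t k = cumloss l (t - 1) k + l t k"
  unfolding cumloss_def by (cases t) auto

lemma minloss_le: "k < K \<Longrightarrow> minloss K l t \<le> cumloss l t k"
  unfolding minloss_def by simp

lemma minloss_attained:
  assumes "K \<ge> 1"
  obtains k where "k < K" "cumloss l t k = minloss K l t"
proof -
  have "minloss K l t \<in> (\<lambda>k. cumloss l t k) ` {..<K}"
    unfolding minloss_def using assms by (intro Min_in) (auto simp: lessThan_empty_iff)
  then show ?thesis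
    using that by auto
qed

lemma minloss_single_expert [simp]: "minloss 1 l t = cumloss l t 0"
  by (simp add: minloss_def lessThan_Suc)

definition leaders :: "nat \<Rightarrow> (nat \<Rightarrow> nat \<Rightarrow> real) \<Rightarrow> nat \<Rightarrow> nat set" where
  "leaders K l t = {k. k < K \<and> cumloss l t k = minloss K l t}"

lemma finite_leaders [simp]: "finite (leaders K l t)"
  unfolding leaders_def by simp

lemma leaders_nonempty: "K \<ge> 1 \<Longrightarrow> leaders K l t \<noteq> {}"
  unfolding leaders_def by (metis (mono_tags, lifting) empty_Collect_eq minloss_attained)

lemma ew_weight_infinity:
  "k < K \<Longrightarrow> ew_weight K l \<infinity> t k =
     (if k \<in> leaders K l (t - 1) then 1 / real (card (leaders K l (t - 1))) else 0)"
  unfolding ew_weight_def leaders_def by simp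

lemma prob_vector_ew_weight:
  assumes K: "K \<ge> 1" and "0 < \<eta>"
  shows "prob_vector {..<K} (ew_weight K l \<eta> t)"
proof (cases \<eta>)
  case (real e)
  define Z where "Z = (\<Sum>j<K. exp (- e * cumloss l (t - 1) j))"
  have "0 < Z"
    unfolding Z_def using K by (intro sum_pos) (auto simp: lessThan_empty_iff)
  moreover have "ew_weight K l \<eta> t k = exp (- e * cumloss l (t - 1) k) / Z" for k
    unfolding ew_weight_def Z_def real by simp
  ultimately show ?thesis
    by unfold_locales (simp_all add: Z_def flip: sum_divide_distrib)
next
  case PInf
  define C where "C = card (leaders K l (t - 1))"
  have sub: "leaders K l (t - 1) \<subseteq> {..<K}"
    by (auto simp: leaders_def)
  have "sum (ew_weight K l \<infinity> t) {..<K} = sum (ew_weight K l \<infinity> t) (leaders K l (t - 1))"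
    using sub by (intro sum.mono_neutral_right) (auto simp: ew_weight_infinity)
  also have "\<dots> = (\<Sum>k\<in>leaders K l (t - 1). 1 / real C)"
    using sub by (intro sum.cong) (auto simp: ew_weight_infinity C_def)
  also have "\<dots> = 1"
    using leaders_nonempty[OF K] by (simp add: C_def)
  finally show ?thesis
    unfolding PInf by unfold_locales (auto simp: ew_weight_infinity)
next
  case MInf
  with \<open>0 < \<eta>\<close> show ?thesis
    by simp
qed

context
  fixes K :: nat and l :: "nat \<Rightarrow> nat \<Rightarrow> real" and \<eta> :: ereal and t :: nat
  assumes K: "K \<ge> 1" and \<eta>_pos: "0 < \<eta>"
begin

interpretation hedge: prob_vector "{..<K}" "ew_weight K l \<eta> t"
  using prob_vector_ew_weight[OF K \<eta>_pos] .

lemma hedge_loss_eq_mean: "hedge_loss K l \<eta> t = hedge.mean (l t)"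
  unfolding hedge_loss_def hedge.mean_def ..

lemma loss_var_eq_variance: "loss_var K l \<eta> t = hedge.variance (l t)"
  by (simp add: loss_var_def hedge.variance_def hedge_loss_eq_mean hedge.mean_def)

lemma loss_var_nonneg: "0 \<le> loss_var K l \<eta> t"
  unfolding loss_var_eq_variance by (rule hedge.variance_nonneg)

end

lemma mix_gap_ereal:
  assumes "K \<ge> 1" "0 < e"
  shows "mix_gap K l (ereal e) t = prob_vector.mix_gap_at {..<K} (ew_weight K l (ereal e) t) e (l t)"
proof -
  interpret hedge: prob_vector "{..<K}" "ew_weight K l (ereal e) t"
    using assms by (intro prob_vector_ew_weight) auto
  show ?thesis
    by (simp add: mix_gap_def mix_loss_def hedge_loss_def hedge.mix_gap_at_def hedge.mean_def)
qed

lemma mix_gap_infinity_bounds: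
  assumes K: "K \<ge> 1" and t: "1 \<le> t" and range01: "\<And>k. k < K \<Longrightarrow> 0 \<le> l t k \<and> l t k \<le> 1"
  shows "0 \<le> mix_gap K l \<infinity> t" "mix_gap K l \<infinity> t \<le> 1"
proof -
  interpret hedge: prob_vector "{..<K}" "ew_weight K l \<infinity> t"
    using K by (intro prob_vector_ew_weight) auto
  define M where "M = minloss K l (t - 1)"
  have mix: "mix_loss K l \<infinity> t = minloss K l t - M"
    by (simp add: mix_loss_def M_def)
  have "minloss K l t - M \<le> hedge.mean (l t)"
  proof (rule hedge.mean_ge_on_support)
    fix k
    assume "k \<in> {..<K}" "ew_weight K l \<infinity> t k \<noteq> 0"
    then have "k < K" "cumloss l (t - 1) k = M"
      by (auto simp: ew_weight_infinity leaders_def M_def split: if_splits)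
    then show "minloss K l t - M \<le> l t k"
      using minloss_le[of k K l t] cumloss_step[OF t, of l k] by simp
  qed
  then show "0 \<le> mix_gap K l \<infinity> t"
    using K by (simp add: mix_gap_def mix hedge_loss_eq_mean)
  obtain k where k: "k < K" "cumloss l t k = minloss K l t"
    using minloss_attained[OF K] .
  have "M \<le> minloss K l t"
    using k minloss_le[of k K l "t - 1"] cumloss_step[OF t, of l k] range01[OF k(1)]
    by (simp add: M_def)
  moreover have "hedge.mean (l t) \<le> 1"
    using hedge.mean_mono[of "l t" "\<lambda>_. 1"] range01 by simp
  ultimately show "mix_gap K l \<infinity> t \<le> 1"
    using K by (simp add: mix_gap_def mix hedge_loss_eq_mean)
qed

lemma mix_gap_infinity_single_expert: "1 \<le> t \<Longrightarrow> mix_gap 1 l \<infinity> t = 0"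
  unfolding mix_gap_def mix_loss_def hedge_loss_def ew_weight_def minloss_single_expert
  by (simp add: cumloss_step Collect_conv_if)

lemma mix_gap_bounds:
  assumes K: "K \<ge> 1" and t: "1 \<le> t" and \<eta>: "0 < \<eta>"
    and range01: "\<And>k. k < K \<Longrightarrow> 0 \<le> l t k \<and> l t k \<le> 1"
  shows "0 \<le> mix_gap K l \<eta> t" "mix_gap K l \<eta> t \<le> 1"
proof -
  have "0 \<le> mix_gap K l \<eta> t \<and> mix_gap K l \<eta> t \<le> 1"
  proof (cases \<eta>)
    case (real e)
    interpret hedge: prob_vector "{..<K}" "ew_weight K l \<eta> t"
      using K \<eta> by (rule prob_vector_ew_weight)
    have "0 < e"
      using \<eta> real by simp
    with range01 show ?thesis
      unfolding real mix_gap_ereal[OF K \<open>0 < e\<close>]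
      using hedge.mix_gap_at_nonneg hedge.mix_gap_at_le_one real by auto
  qed (use \<eta> mix_gap_infinity_bounds[of K t l] K t range01 in auto)
  then show "0 \<le> mix_gap K l \<eta> t" "mix_gap K l \<eta> t \<le> 1"
    by auto
qed

lemma mix_gap_bernstein:
  assumes K: "K \<ge> 1" and "0 < e" and range01: "\<And>k. k < K \<Longrightarrow> 0 \<le> l t k \<and> l t k \<le> 1"
  shows "mix_gap K l (ereal e) t * (1 - e / 3) \<le> e * loss_var K l (ereal e) t / 2"
proof -
  have \<eta>_pos: "0 < ereal e"
    using \<open>0 < e\<close> by simp
  interpret hedge: prob_vector "{..<K}" "ew_weight K l (ereal e) t"
    using K \<eta>_pos by (rule prob_vector_ew_weight)
  show ?thesis
    unfolding mix_gap_ereal[OF K \<open>0 < e\<close>] loss_var_eq_variance[OF K \<eta>_pos]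
    using assms by (intro hedge.mix_gap_at_bernstein) auto
qed

definition flop_rate :: "nat \<Rightarrow> real \<Rightarrow> ereal" where
  "flop_rate K b = (if b = 0 then \<infinity> else ereal (ln (real K) / b))"

lemma flop_rate_pos:
  assumes "K \<ge> 1" "0 \<le> b" "K = 1 \<longrightarrow> b = 0"
  shows "0 < flop_rate K b"
  using assms by (auto simp: flop_rate_def)

lemma flop_gap_Suc:
  "flop_gap K l \<phi> \<alpha> (Suc t) = flop_gap K l \<phi> \<alpha> t +
     (if fst (flipflop_state K l \<phi> \<alpha> t) then 0
      else mix_gap K l (flop_rate K (flop_gap K l \<phi> \<alpha> t)) (Suc t))"
  by (cases "flipflop_state K l \<phi> \<alpha> t")
    (simp add: flop_gap_def flop_rate_def Let_def)

lemma flop_var_Suc: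
  "flop_var K l \<phi> \<alpha> (Suc t) = flop_var K l \<phi> \<alpha> t +
     (if fst (flipflop_state K l \<phi> \<alpha> t) then 0
      else loss_var K l (flop_rate K (flop_gap K l \<phi> \<alpha> t)) (Suc t))"
  by (cases "flipflop_state K l \<phi> \<alpha> t")
    (simp add: flop_gap_def flop_var_def flop_rate_def Let_def)

lemma flop_round_tradeoff:
  assumes K: "K \<ge> 1" and t: "1 \<le> t" and range01: "\<And>k. k < K \<Longrightarrow> 0 \<le> l t k \<and> l t k \<le> 1"
    and b: "0 \<le> b" "K = 1 \<longrightarrow> b = 0"
  shows "2 * b * mix_gap K l (flop_rate K b) t
    \<le> loss_var K l (flop_rate K b) t * ln K + 2/3 * ln K * mix_gap K l (flop_rate K b) t"
proof (cases "b = 0")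
  case True
  have "0 < flop_rate K b"
    using K b by (rule flop_rate_pos)
  then show ?thesis
    using True K mix_gap_bounds[of K t "flop_rate K b" l] t range01 loss_var_nonneg[OF K] by simp
next
  case False
  then have "K \<noteq> 1" "0 < b"
    using b by auto
  with K have "0 < ln K"
    by simp
  define e where "e = ln K / b"
  have "0 < e"
    using \<open>0 < ln K\<close> \<open>0 < b\<close> by (simp add: e_def)
  have rate: "flop_rate K b = ereal e"
    using False by (simp add: flop_rate_def e_def)
  have "2 * b * (mix_gap K l (ereal e) t * (1 - e / 3)) \<le> 2 * b * (e * loss_var K l (ereal e) t / 2)"
    using mix_gap_bernstein[where l = l and t = t, OF K \<open>0 < e\<close> range01] b
    by (intro mult_left_mono) auto
  moreover have "ln K = e * b"
    using \<open>0 < b\<close> by (simp add: e_def)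
  ultimately show ?thesis
    unfolding rate by (simp add: algebra_simps)
qed

lemma quadratic_bound_add:
  fixes b c d v L :: real
  assumes "b\<^sup>2 \<le> c * L + (1 + 2/3 * L) * b" "0 \<le> d" "d \<le> 1"
    and "2 * b * d \<le> v * L + 2/3 * L * d"
  shows "(b + d)\<^sup>2 \<le> (c + v) * L + (1 + 2/3 * L) * (b + d)"
proof -
  have "d\<^sup>2 \<le> d"
    using assms by (simp add: power2_eq_square mult_left_le)
  moreover have "(b + d)\<^sup>2 = b\<^sup>2 + 2 * b * d + d\<^sup>2"
    by (simp add: power2_eq_square algebra_simps)
  moreover have "(c + v) * L + (1 + 2/3 * L) * (b + d)
      = (c * L + (1 + 2/3 * L) * b) + (v * L + 2/3 * L * d) + d"
    by (simp add: algebra_simps)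
  ultimately show ?thesis
    using assms by linarith
qed

text \<open>The conjunct for \<open>K = 1\<close> is needed because there \<open>b > 0\<close> would give the
  learning rate \<open>ln 1 / b = 0\<close>, outside the range where the mixability gap bounds hold.\<close>
lemma flop_gap_invariant:
  assumes K: "K \<ge> 1"
    and range01: "\<And>t k. 1 \<le> t \<Longrightarrow> t \<le> T \<Longrightarrow> k < K \<Longrightarrow> 0 \<le> l t k \<and> l t k \<le> 1"
  shows "t \<le> T \<Longrightarrow> 0 \<le> flop_gap K l \<phi> \<alpha> t \<and> (K = 1 \<longrightarrow> flop_gap K l \<phi> \<alpha> t = 0) \<and>
    (flop_gap K l \<phi> \<alpha> t)\<^sup>2 \<le> flop_var K l \<phi> \<alpha> t * ln K + (1 + 2/3 * ln K) * flop_gap K l \<phi> \<alpha> t"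
proof (induction t)
  case 0
  then show ?case
    by (simp add: flop_gap_def flop_var_def)
next
  case (Suc t)
  define b where "b = flop_gap K l \<phi> \<alpha> t"
  define \<delta> where "\<delta> = mix_gap K l (flop_rate K b) (Suc t)"
  define v where "v = loss_var K l (flop_rate K b) (Suc t)"
  have IH: "0 \<le> b" "K = 1 \<longrightarrow> b = 0"
    "b\<^sup>2 \<le> flop_var K l \<phi> \<alpha> t * ln K + (1 + 2/3 * ln K) * b"
    using Suc by (auto simp: b_def)
  have round: "\<And>k. k < K \<Longrightarrow> 0 \<le> l (Suc t) k \<and> l (Suc t) k \<le> 1"
    using range01 Suc.prems by simp
  have "0 \<le> \<delta>" "\<delta> \<le> 1"
    unfolding \<delta>_def
    using mix_gap_bounds[of K "Suc t" "flop_rate K b" l] K flop_rate_pos[OF K IH(1,2)] round by auto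
  moreover have "K = 1 \<longrightarrow> \<delta> = 0"
    using IH(2) mix_gap_infinity_single_expert[of "Suc t" l] by (auto simp: \<delta>_def flop_rate_def)
  moreover have "(b + \<delta>)\<^sup>2 \<le> (flop_var K l \<phi> \<alpha> t + v) * ln K + (1 + 2/3 * ln K) * (b + \<delta>)"
    using IH(3) \<open>0 \<le> \<delta>\<close> \<open>\<delta> \<le> 1\<close>
      flop_round_tradeoff[where l = l and t = "Suc t", OF K _ round IH(1,2)]
    unfolding \<delta>_def v_def by (intro quadratic_bound_add) auto
  ultimately show ?case
    using IH by (simp add: flop_gap_Suc flop_var_Suc b_def \<delta>_def v_def)
qed

theorem lemma12:
  fixes K T :: nat and l :: "nat \<Rightarrow> nat \<Rightarrow> real" and \<phi> \<alpha> :: real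
  assumes "K \<ge> 1" and "T \<ge> 1"
    and "\<And>t k. 1 \<le> t \<Longrightarrow> t \<le> T \<Longrightarrow> k < K \<Longrightarrow> 0 \<le> l t k \<and> l t k \<le> 1"
    and "\<phi> > 1" and "\<alpha> > 0"
  shows "(flop_gap K l \<phi> \<alpha> T)\<^sup>2 \<le> flop_var K l \<phi> \<alpha> T * ln (real K)
           + (1 + 2/3 * ln (real K)) * flop_gap K l \<phi> \<alpha> T"
  using flop_gap_invariant[where T = T and t = T, OF assms(1)] assms(3) by blast

end
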